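(* Under Assumption A(b),(c) in setting (E), let $\omega\in(0,1]$, set $\widetilde S^{-1}:=Gx^0$ and for $k\ge0$ $$\widetilde S^k:=(1-\omega)\big[\widetilde S^{k-1}+2G_{\mathcal B_k}x^k-3G_{\mathcal B_k}x^{k-1}+G_{\mathcal B_k}x^{k-2}\big]+\omega\,\overline S^k_{\hat{\mathcal B}_k},$$ where $\mathcal B_k$ is a fresh i.i.d. mini-batch of size $b$, $\hat{\mathcal B}_k$ a fresh i.i.d. mini-batch of size $\hat b$ (possibly overlapping with $\mathcal B_k$), and $\overline S^k_{\hat{\mathcal B}_k}$ is built from $\hat{\mathcal B}_k$ with $\mathbb E_{\hat{\mathcal B}_k}[\overline S^k_{\hat{\mathcal B}_k}]=S^k$ and $\sigma_k^2:=\mathbb E_{\hat{\mathcal B}_k}\|\overline S^k_{\hat{\mathcal B}_k}-S^k\|^2$. Then $\widetilde S^k$ belongs to class (B) with $\Delta_k:=\|\widetilde S^k-S^k\|^2$, $\tau=\omega$, $\kappa=\omega(2-\omega)$, $\Theta=\frac{8C(1-\omega)^2L^2}{b}$, $\hat\Theta=\frac{2C(1-\omega)^2L^2}{b}$, $\delta_k=C\omega^2\sigma_k^2$, where $C=1$ if $\mathcal B_k$ and $\hat{\mathcal B}_k$ are independent and $C=2$ otherwise.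
   Context: Setting: $G:\mathbb{R}^p\to\mathbb{R}^p$, $T:\mathbb{R}^p\rightrightarrows\mathbb{R}^p$, $\Phi:=G+T$, $J_{\eta T}:=(\mathbb{I}+\eta T)^{-1}$. (E): $Gx=\mathbb{E}_{\zeta\sim\mathbb P}[\mathbf G(x,\zeta)]$. $G_{\mathcal B}x:=\frac1{|\mathcal B|}\sum_{\zeta\in\mathcal B}\mathbf G(x,\zeta)$; i.i.d. mini-batches are samples drawn i.i.d. from $\mathbb P$ independently of the past. Assumption A: (b) $\mathbb{E}_\zeta\|\mathbf G(x,\zeta)-Gx\|^2\le\sigma^2$; (c) $\mathbb{E}_\zeta\|\mathbf G(x,\zeta)-\mathbf G(y,\zeta)\|^2\le L^2\|x-y\|^2$. Scheme (VrFRBS): stepsize $\eta>0$, $x^0$, $x^{-2}=x^{-1}=x^0$, $\xi^0\in Tx^0$; for $k\ge0$: $S^k:=2Gx^k-Gx^{k-1}$, estimator $\widetilde S^k$, $x^{k+1}\in J_{\eta T}(x^k-\eta\widetilde S^k)$, $\xi^{k+1}:=\eta^{-1}(x^k-\eta\widetilde S^k-x^{k+1})\in Tx^{k+1}$; $e^k:=\widetilde S^k-S^k$. $\mathcal F_k$: $\sigma$-algebra of all randomness up to iteration $k$; $\mathbb E_k[\cdot]:=\mathbb E[\cdot\mid\mathcal F_k]$. Class (B): there exist nonnegative random variables $\Delta_k$ ($\Delta_{-1}:=0$), $\tau,\kappa\in(0,1]$, $\Theta,\hat\Theta\ge0$, nonnegative $\{\delta_k\}$ such that with $e^{-1}:=0$,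 a.s. for all $k\ge0$: $\mathbb E_k[e^k]=(1-\tau)e^{k-1}$; $\mathbb E_k\|e^k\|^2\le\mathbb E_k[\Delta_k]$; $\mathbb E_k[\Delta_k]\le(1-\kappa)\Delta_{k-1}+\Theta\|x^k-x^{k-1}\|^2+\hat\Theta\|x^{k-1}-x^{k-2}\|^2+\delta_k$. *)

theory Defs
  imports "HOL-Probability.Probability"
begin

definition batch_law :: "'z measure \<Rightarrow> nat \<Rightarrow> (nat \<Rightarrow> 'z) measure" where
  "batch_law P n = (\<Pi>\<^sub>M j\<in>{..<n}. P)"

definition batch_op :: "('a \<Rightarrow> 'z \<Rightarrow> 'b::real_vector) \<Rightarrow> nat \<Rightarrow> (nat \<Rightarrow> 'z) \<Rightarrow> 'a \<Rightarrow> 'b" where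
  "batch_op Gs n \<beta> x = (1 / real n) *\<^sub>R (\<Sum>j<n. Gs x (\<beta> j))"

text \<open>The variance-reduced estimator of the theorem at iteration k, as a function of the
  fresh batches (beta = B_k, betah = hat B_k), with the past x^k, x^{k-1}, x^{k-2} and
  tilde S^{k-1} frozen.\<close>
definition vr_est ::
  "('a \<Rightarrow> 'z \<Rightarrow> 'a::real_vector) \<Rightarrow> nat \<Rightarrow> real \<Rightarrow> 'a \<Rightarrow> ((nat \<Rightarrow> 'z) \<Rightarrow> 'a)
    \<Rightarrow> 'a \<Rightarrow> 'a \<Rightarrow> 'a \<Rightarrow> (nat \<Rightarrow> 'z) \<Rightarrow> (nat \<Rightarrow> 'z) \<Rightarrow> 'a" where
  "vr_est Gs b \<omega> Sprev Sbar xk xk1 xk2 \<beta> \<beta>h =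
     (1 - \<omega>) *\<^sub>R (Sprev + 2 *\<^sub>R batch_op Gs b \<beta> xk - 3 *\<^sub>R batch_op Gs b \<beta> xk1
                     + batch_op Gs b \<beta> xk2) + \<omega> *\<^sub>R Sbar \<beta>h"

text \<open>One step of class (B): Q is the law of the fresh randomness of iteration k (so that
  E_k is integration w.r.t. Q with the F_k-measurable past frozen); e = e^k, Delta = Delta_k
  as functions of the fresh randomness; eprev = e^{k-1}, Dprev = Delta_{k-1};
  dx = ||x^k-x^{k-1}||^2, dx' = ||x^{k-1}-x^{k-2}||^2; delta = delta_k.\<close>
definition classB_step ::
  "'w measure \<Rightarrow> ('w \<Rightarrow> 'a::euclidean_space) \<Rightarrow> ('w \<Rightarrow> real) \<Rightarrow> 'a \<Rightarrow> real
    \<Rightarrow> real \<Rightarrow> real \<Rightarrow> real \<Rightarrow> real \<Rightarrow> real \<Rightarrow> real \<Rightarrow> ennreal \<Rightarrow> bool" where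
  "classB_step Q e \<Delta> eprev Dprev \<tau> \<kappa> \<Theta> \<Theta>h dx dx' \<delta> \<longleftrightarrow>
     0 < \<tau> \<and> \<tau> \<le> 1 \<and> 0 < \<kappa> \<and> \<kappa> \<le> 1 \<and> 0 \<le> \<Theta> \<and> 0 \<le> \<Theta>h \<and> 0 \<le> Dprev \<and>
     (\<forall>w\<in>space Q. 0 \<le> \<Delta> w) \<and>
     integrable Q e \<and> (\<integral>w. e w \<partial>Q) = (1 - \<tau>) *\<^sub>R eprev \<and>
     (\<integral>\<^sup>+w. ennreal ((norm (e w))\<^sup>2) \<partial>Q) \<le> (\<integral>\<^sup>+w. ennreal (\<Delta> w) \<partial>Q) \<and>
     (\<integral>\<^sup>+w. ennreal (\<Delta> w) \<partial>Q) \<le> ennreal ((1 - \<kappa>) * Dprev + \<Theta> * dx + \<Theta>h * dx') + \<delta>"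

end

theory Submission
  imports Defs
begin

(*
  Write e = tilde S^k - S^k. Since S^k - S^{k-1} = 2 G x^k - 3 G x^{k-1} + G x^{k-2}, the recursion
  for tilde S^k gives

    e = (1 - omega) e^{k-1} + (1 - omega) Z(B_k) + omega W(hat B_k),

  where Z is the mean over the batch of b i.i.d. centred copies of the stochastic difference
  D(zeta) = (2 G(x^k, zeta) - G(x^{k-1}, zeta)) - (2 G(x^{k-1}, zeta) - G(x^{k-2}, zeta)), and
  W = bar S^k - S^k. Both noises are unbiased, so E_k e = (1 - omega) e^{k-1}, and the bias-variance
  identity gives E_k ||e||^2 = (1 - omega)^2 ||e^{k-1}||^2 + E ||(1 - omega) Z + omega W||^2, where
  (1 - omega)^2 = 1 - omega (2 - omega).

  Independence of the samples in B_k gives E ||Z||^2 = Var D / b <= E ||D||^2 / b, and splitting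
  D = 2 (G(x^k, .) - G(x^{k-1}, .)) - (G(x^{k-1}, .) - G(x^{k-2}, .)) and using A(c) bounds E ||D||^2
  by 8 L^2 ||x^k - x^{k-1}||^2 + 2 L^2 ||x^{k-1} - x^{k-2}||^2. Finally
  E ||(1 - omega) Z + omega W||^2 <= C ((1 - omega)^2 E ||Z||^2 + omega^2 sigma_k^2): if the two
  batches are independent the cross term vanishes (C = 1), otherwise ||u + v||^2 <= 2 ||u||^2 + 2 ||v||^2
  (C = 2).
*)

section \<open>Second moments of random vectors\<close>

lemma norm_add_sq_le:
  fixes u v :: "'a::real_normed_vector"
  shows "(norm (u + v))\<^sup>2 \<le> 2 * (norm u)\<^sup>2 + 2 * (norm v)\<^sup>2"
proof -
  have "(norm (u + v))\<^sup>2 \<le> (norm u + norm v)\<^sup>2"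
    by (rule power_mono[OF norm_triangle_ineq norm_ge_zero])
  also have "\<dots> \<le> 2 * (norm u)\<^sup>2 + 2 * (norm v)\<^sup>2"
    using sum_squares_bound[of "norm u" "norm v"] by (simp add: power2_eq_square algebra_simps)
  finally show ?thesis .
qed

lemma nn_integral_norm_add_sq_le:
  fixes f g :: "'b \<Rightarrow> 'a::euclidean_space"
  assumes [measurable]: "f \<in> borel_measurable M" "g \<in> borel_measurable M"
  shows "(\<integral>\<^sup>+x. ennreal ((norm (f x + g x))\<^sup>2) \<partial>M)
           \<le> 2 * (\<integral>\<^sup>+x. ennreal ((norm (f x))\<^sup>2) \<partial>M) + 2 * (\<integral>\<^sup>+x. ennreal ((norm (g x))\<^sup>2) \<partial>M)"
proof -
  have "(\<integral>\<^sup>+x. ennreal ((norm (f x + g x))\<^sup>2) \<partial>M)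
          \<le> (\<integral>\<^sup>+x. 2 * ennreal ((norm (f x))\<^sup>2) + 2 * ennreal ((norm (g x))\<^sup>2) \<partial>M)"
    by (intro nn_integral_mono)
       (simp add: norm_add_sq_le flip: ennreal_plus ennreal_mult' ennreal_numeral)
  also have "\<dots> = 2 * (\<integral>\<^sup>+x. ennreal ((norm (f x))\<^sup>2) \<partial>M) + 2 * (\<integral>\<^sup>+x. ennreal ((norm (g x))\<^sup>2) \<partial>M)"
    by (simp add: nn_integral_add nn_integral_cmult)
  finally show ?thesis .
qed

lemma integrable_norm_sq_iff:
  fixes f :: "'b \<Rightarrow> 'a::euclidean_space"
  assumes "f \<in> borel_measurable M"
  shows "integrable M (\<lambda>x. (norm (f x))\<^sup>2) \<longleftrightarrow> (\<integral>\<^sup>+x. ennreal ((norm (f x))\<^sup>2) \<partial>M) < \<infinity>"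
  using assms by (simp add: integrable_iff_bounded)

lemma nn_integral_norm_scaleR_sq:
  fixes f :: "'b \<Rightarrow> 'a::euclidean_space"
  assumes "f \<in> borel_measurable M"
  shows "(\<integral>\<^sup>+x. ennreal ((norm (c *\<^sub>R f x))\<^sup>2) \<partial>M) = ennreal (c\<^sup>2) * (\<integral>\<^sup>+x. ennreal ((norm (f x))\<^sup>2) \<partial>M)"
proof -
  have "(\<lambda>x. ennreal ((norm (f x))\<^sup>2)) \<in> borel_measurable M"
    using assms by measurable
  then show ?thesis
    by (simp add: power_mult_distrib ennreal_mult nn_integral_cmult)
qed

lemma (in prob_space) integral_norm_sq_bias_variance:
  fixes f :: "'a \<Rightarrow> 'b::euclidean_space"
  assumes f: "integrable M f" and f2: "integrable M (\<lambda>x. (norm (f x))\<^sup>2)"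
  shows "integrable M (\<lambda>x. (norm (f x - expectation f))\<^sup>2)"
    and "expectation (\<lambda>x. (norm (f x))\<^sup>2)
           = (norm (expectation f))\<^sup>2 + expectation (\<lambda>x. (norm (f x - expectation f))\<^sup>2)"
proof -
  let ?c = "expectation f"
  have expand: "(norm (f x - ?c))\<^sup>2 = (norm (f x))\<^sup>2 - 2 * (f x \<bullet> ?c) + (norm ?c)\<^sup>2" for x
    by (simp add: power2_norm_eq_inner inner_diff_left inner_diff_right inner_commute)
  show "integrable M (\<lambda>x. (norm (f x - ?c))\<^sup>2)"
    unfolding expand using f f2 by simp
  have "expectation (\<lambda>x. (norm (f x - ?c))\<^sup>2) = expectation (\<lambda>x. (norm (f x))\<^sup>2) - (norm ?c)\<^sup>2"
    unfolding expand using f f2 by (simp add: prob_space power2_norm_eq_inner)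
  then show "expectation (\<lambda>x. (norm (f x))\<^sup>2) = (norm ?c)\<^sup>2 + expectation (\<lambda>x. (norm (f x - ?c))\<^sup>2)"
    by simp
qed

lemma (in prob_space) nn_integral_norm_sq_bias_variance:
  fixes f :: "'a \<Rightarrow> 'b::euclidean_space"
  assumes f: "integrable M f"
  shows "(\<integral>\<^sup>+x. ennreal ((norm (f x))\<^sup>2) \<partial>M)
           = ennreal ((norm (expectation f))\<^sup>2) + (\<integral>\<^sup>+x. ennreal ((norm (f x - expectation f))\<^sup>2) \<partial>M)"
proof (cases "integrable M (\<lambda>x. (norm (f x))\<^sup>2)")
  case True
  note bv = integral_norm_sq_bias_variance[OF f True]
  show ?thesis
    using nn_integral_eq_integral[OF True] nn_integral_eq_integral[OF bv(1)] bv(2)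
    by (simp add: ennreal_plus)
next
  case False
  let ?c = "expectation f"
  have [measurable]: "f \<in> borel_measurable M" using f by auto
  have fc: "(\<lambda>x. f x - ?c) \<in> borel_measurable M" by measurable
  have "\<not> integrable M (\<lambda>x. (norm (f x - ?c))\<^sup>2)"
  proof
    assume "integrable M (\<lambda>x. (norm (f x - ?c))\<^sup>2)"
    then have "(\<integral>\<^sup>+x. ennreal ((norm (f x - ?c))\<^sup>2) \<partial>M) < \<infinity>"
      by (simp add: integrable_norm_sq_iff)
    then have "2 * (\<integral>\<^sup>+x. ennreal ((norm (f x - ?c))\<^sup>2) \<partial>M)
                 + 2 * (\<integral>\<^sup>+x. ennreal ((norm ?c)\<^sup>2) \<partial>M) < \<infinity>"
      by (simp add: emeasure_space_1 ennreal_mult_less_top)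
    then have "(\<integral>\<^sup>+x. ennreal ((norm ((f x - ?c) + ?c))\<^sup>2) \<partial>M) < \<infinity>"
      by (rule le_less_trans[OF nn_integral_norm_add_sq_le[OF fc borel_measurable_const]])
    with False show False by (simp add: integrable_norm_sq_iff)
  qed
  then show ?thesis
    using False by (simp add: integrable_norm_sq_iff less_top[symmetric])
qed

section \<open>Sums of independent random vectors\<close>

lemma (in prob_space) indep_var_integral_inner:
  fixes X Y :: "'a \<Rightarrow> 'b::euclidean_space"
  assumes ind: "indep_var borel X borel Y" and X: "integrable M X" and Y: "integrable M Y"
  shows "integrable M (\<lambda>x. X x \<bullet> Y x)"
    and "expectation (\<lambda>x. X x \<bullet> Y x) = expectation X \<bullet> expectation Y"
proof -
  have coord: "indep_var borel (\<lambda>x. X x \<bullet> e) borel (\<lambda>x. Y x \<bullet> e)" for e :: 'b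
    using indep_var_compose[OF ind, of "\<lambda>v. v \<bullet> e" borel "\<lambda>v. v \<bullet> e" borel]
    by (simp add: comp_def)
  have coord_int: "integrable M (\<lambda>x. (X x \<bullet> e) * (Y x \<bullet> e))" for e :: 'b
    using X Y by (intro indep_var_integrable[OF coord]) simp_all
  have expand: "X x \<bullet> Y x = (\<Sum>e\<in>Basis. (X x \<bullet> e) * (Y x \<bullet> e))" for x
    by (rule euclidean_inner)
  show "integrable M (\<lambda>x. X x \<bullet> Y x)"
    unfolding expand using coord_int by simp
  have "expectation (\<lambda>x. X x \<bullet> Y x) = (\<Sum>e\<in>Basis. expectation (\<lambda>x. (X x \<bullet> e) * (Y x \<bullet> e)))"
    unfolding expand using coord_int by simp
  also have "\<dots> = (\<Sum>e\<in>Basis. (expectation X \<bullet> e) * (expectation Y \<bullet> e))"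
    using X Y by (intro sum.cong refl) (simp add: indep_var_lebesgue_integral[OF coord])
  also have "\<dots> = expectation X \<bullet> expectation Y"
    by (rule euclidean_inner[symmetric])
  finally show "expectation (\<lambda>x. X x \<bullet> Y x) = expectation X \<bullet> expectation Y" .
qed

lemma (in prob_space) integral_norm_add_sq_indep:
  fixes X Y :: "'a \<Rightarrow> 'b::euclidean_space"
  assumes ind: "indep_var borel X borel Y" and X: "integrable M X" and Y: "integrable M Y"
    and X2: "integrable M (\<lambda>x. (norm (X x))\<^sup>2)" and Y2: "integrable M (\<lambda>x. (norm (Y x))\<^sup>2)"
    and X0: "expectation X = 0"
  shows "integrable M (\<lambda>x. (norm (X x + Y x))\<^sup>2)"
    and "expectation (\<lambda>x. (norm (X x + Y x))\<^sup>2)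
           = expectation (\<lambda>x. (norm (X x))\<^sup>2) + expectation (\<lambda>x. (norm (Y x))\<^sup>2)"
proof -
  have expand: "(norm (X x + Y x))\<^sup>2 = (norm (X x))\<^sup>2 + 2 * (X x \<bullet> Y x) + (norm (Y x))\<^sup>2" for x
    by (simp add: power2_norm_eq_inner inner_add_left inner_add_right inner_commute)
  note XY = indep_var_integral_inner[OF ind X Y]
  show "integrable M (\<lambda>x. (norm (X x + Y x))\<^sup>2)"
    unfolding expand using X2 Y2 XY by simp
  show "expectation (\<lambda>x. (norm (X x + Y x))\<^sup>2)
          = expectation (\<lambda>x. (norm (X x))\<^sup>2) + expectation (\<lambda>x. (norm (Y x))\<^sup>2)"
    unfolding expand using X2 Y2 XY X0 by simp
qed

lemma (in prob_space) nn_integral_norm_add_sq_indep: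
  fixes X Y :: "'a \<Rightarrow> 'b::euclidean_space"
  assumes ind: "indep_var borel X borel Y" and X: "integrable M X" and Y: "integrable M Y"
    and X0: "expectation X = 0"
  shows "(\<integral>\<^sup>+x. ennreal ((norm (X x + Y x))\<^sup>2) \<partial>M)
           \<le> (\<integral>\<^sup>+x. ennreal ((norm (X x))\<^sup>2) \<partial>M) + (\<integral>\<^sup>+x. ennreal ((norm (Y x))\<^sup>2) \<partial>M)"
proof (cases "integrable M (\<lambda>x. (norm (X x))\<^sup>2) \<and> integrable M (\<lambda>x. (norm (Y x))\<^sup>2)")
  case True
  note XY = integral_norm_add_sq_indep[OF ind X Y _ _ X0]
  show ?thesis
    using True XY by (simp add: nn_integral_eq_integral ennreal_plus)
next
  case False
  then show ?thesis
    using X Y by (auto simp: integrable_norm_sq_iff less_top[symmetric])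
qed

lemma (in prob_space) indep_vars_sum_euclidean:
  fixes X :: "'i \<Rightarrow> 'a \<Rightarrow> 'b::euclidean_space"
  assumes I: "finite I" "i \<notin> I" and indep: "indep_vars (\<lambda>_. borel) X (insert i I)"
  shows "indep_var borel (X i) borel (\<lambda>\<omega>. \<Sum>j\<in>I. X j \<omega>)"
proof -
  have "indep_var (PiM {i} (\<lambda>_. borel)) (\<lambda>\<omega>. restrict (\<lambda>j. X j \<omega>) {i})
                  (PiM I (\<lambda>_. borel)) (\<lambda>\<omega>. restrict (\<lambda>j. X j \<omega>) I)"
    using I by (intro indep_var_restrict[OF indep]) auto
  from indep_var_compose[OF this, of "\<lambda>f. f i" borel "\<lambda>f. \<Sum>j\<in>I. f j" borel]
  show ?thesis
    using I by (simp add: comp_def)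
qed

lemma (in prob_space) integral_norm_sum_sq_indep:
  fixes X :: "'i \<Rightarrow> 'a \<Rightarrow> 'b::euclidean_space"
  assumes indep: "indep_vars (\<lambda>_. borel) X I" and J: "finite J" "J \<subseteq> I"
    and X: "\<And>i. i \<in> J \<Longrightarrow> integrable M (X i)"
    and X2: "\<And>i. i \<in> J \<Longrightarrow> integrable M (\<lambda>x. (norm (X i x))\<^sup>2)"
    and X0: "\<And>i. i \<in> J \<Longrightarrow> expectation (X i) = 0"
  shows "integrable M (\<lambda>x. (norm (\<Sum>i\<in>J. X i x))\<^sup>2)
         \<and> expectation (\<lambda>x. (norm (\<Sum>i\<in>J. X i x))\<^sup>2) = (\<Sum>i\<in>J. expectation (\<lambda>x. (norm (X i x))\<^sup>2))"
  using J X X2 X0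
proof (induction J rule: finite_induct)
  case empty
  then show ?case by simp
next
  case (insert i J)
  have ind: "indep_var borel (X i) borel (\<lambda>x. \<Sum>j\<in>J. X j x)"
    using insert.hyps insert.prems(1) by (intro indep_vars_sum_euclidean indep_vars_subset[OF indep])
  have IH: "integrable M (\<lambda>x. (norm (\<Sum>j\<in>J. X j x))\<^sup>2)"
      "expectation (\<lambda>x. (norm (\<Sum>j\<in>J. X j x))\<^sup>2) = (\<Sum>j\<in>J. expectation (\<lambda>x. (norm (X j x))\<^sup>2))"
    using insert.IH insert.prems by auto
  have sum_int: "integrable M (\<lambda>x. \<Sum>j\<in>J. X j x)"
    using insert.prems(2) by auto
  note step = integral_norm_add_sq_indep[OF ind _ sum_int _ IH(1)]
  show ?case
    using insert.hyps insert.prems step IH(2) by simp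
qed

section \<open>Mini-batches and their couplings\<close>

lemma measure_preserving_integral:
  fixes h :: "'c \<Rightarrow> 'b::{banach, second_countable_topology}"
  assumes g: "g \<in> measurable M N" and distr: "distr M N g = N" and h: "h \<in> borel_measurable N"
  shows "integrable M (\<lambda>x. h (g x)) \<longleftrightarrow> integrable N h"
    and "(\<integral>x. h (g x) \<partial>M) = integral\<^sup>L N h"
  using integrable_distr_eq[OF g h] integral_distr[OF g h] distr by simp_all

lemma integral_PiM_component:
  fixes h :: "'z \<Rightarrow> 'b::{banach, second_countable_topology}"
  assumes P: "prob_space P" and j: "j \<in> I" and h: "h \<in> borel_measurable P"
  shows "integrable (PiM I (\<lambda>_. P)) (\<lambda>\<beta>. h (\<beta> j)) \<longleftrightarrow> integrable P h"
    and "(\<integral>\<beta>. h (\<beta> j) \<partial>PiM I (\<lambda>_. P)) = integral\<^sup>L P h"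
proof -
  have "(\<lambda>\<beta>. \<beta> j) \<in> measurable (PiM I (\<lambda>_. P)) P" "distr (PiM I (\<lambda>_. P)) P (\<lambda>\<beta>. \<beta> j) = P"
    using j P by (auto intro: measurable_component_singleton distr_PiM_component)
  from measure_preserving_integral[OF this h]
  show "integrable (PiM I (\<lambda>_. P)) (\<lambda>\<beta>. h (\<beta> j)) \<longleftrightarrow> integrable P h"
    "(\<integral>\<beta>. h (\<beta> j) \<partial>PiM I (\<lambda>_. P)) = integral\<^sup>L P h"
    by simp_all
qed

lemma indep_vars_PiM_components:
  assumes P: "prob_space P" and I: "I \<noteq> {}"
  shows "prob_space.indep_vars (PiM I (\<lambda>_. P)) (\<lambda>_. P) (\<lambda>i \<beta>. \<beta> i) I"
proof -
  let ?B = "PiM I (\<lambda>_. P)"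
  interpret prob_space ?B
    using P by (rule prob_space_PiM)
  have "distr ?B ?B (\<lambda>\<beta>. \<lambda>i\<in>I. \<beta> i) = distr ?B ?B (\<lambda>\<beta>. \<beta>)"
    by (intro distr_cong) (auto simp: space_PiM PiE_iff extensional_restrict)
  also have "\<dots> = ?B"
    by (rule distr_id)
  also have "\<dots> = PiM I (\<lambda>i. distr ?B P (\<lambda>\<beta>. \<beta> i))"
    by (intro PiM_cong refl distr_PiM_component[symmetric]) (simp_all add: P)
  finally show ?thesis
    using I by (subst indep_vars_iff_distr_eq_PiM') auto
qed

lemma batch_mean_second_moment:
  fixes F :: "'z \<Rightarrow> 'a::euclidean_space"
  assumes P: "prob_space P" and n: "0 < n"
    and F: "integrable P F" and F2: "integrable P (\<lambda>\<zeta>. (norm (F \<zeta>))\<^sup>2)" and F0: "integral\<^sup>L P F = 0"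
  shows "integrable (batch_law P n) (\<lambda>\<beta>. (1 / real n) *\<^sub>R (\<Sum>j<n. F (\<beta> j)))"
    and "(\<integral>\<beta>. (1 / real n) *\<^sub>R (\<Sum>j<n. F (\<beta> j)) \<partial>batch_law P n) = 0"
    and "integrable (batch_law P n) (\<lambda>\<beta>. (norm ((1 / real n) *\<^sub>R (\<Sum>j<n. F (\<beta> j))))\<^sup>2)"
    and "(\<integral>\<beta>. (norm ((1 / real n) *\<^sub>R (\<Sum>j<n. F (\<beta> j))))\<^sup>2 \<partial>batch_law P n)
           = (\<integral>\<zeta>. (norm (F \<zeta>))\<^sup>2 \<partial>P) / real n"
proof -
  let ?B = "PiM {..<n} (\<lambda>_. P)"
  interpret B: prob_space ?B
    using P by (rule prob_space_PiM)
  have Fm [measurable]: "F \<in> borel_measurable P"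
    using F by auto
  have F2m: "(\<lambda>\<zeta>. (norm (F \<zeta>))\<^sup>2) \<in> borel_measurable P"
    by measurable
  have Fj: "integrable ?B (\<lambda>\<beta>. F (\<beta> j))" "(\<integral>\<beta>. F (\<beta> j) \<partial>?B) = 0"
      "integrable ?B (\<lambda>\<beta>. (norm (F (\<beta> j)))\<^sup>2)"
      "(\<integral>\<beta>. (norm (F (\<beta> j)))\<^sup>2 \<partial>?B) = (\<integral>\<zeta>. (norm (F \<zeta>))\<^sup>2 \<partial>P)"
    if "j < n" for j
    using integral_PiM_component[OF P _ Fm, of j] integral_PiM_component[OF P _ F2m, of j] that F F2 F0
    by simp_all
  have indep: "B.indep_vars (\<lambda>_. borel) (\<lambda>j \<beta>. F (\<beta> j)) {..<n}"
    using n by (intro B.indep_vars_compose2[OF indep_vars_PiM_components[OF P]]) auto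
  have sum: "integrable ?B (\<lambda>\<beta>. (norm (\<Sum>j<n. F (\<beta> j)))\<^sup>2)"
      "(\<integral>\<beta>. (norm (\<Sum>j<n. F (\<beta> j)))\<^sup>2 \<partial>?B) = real n * (\<integral>\<zeta>. (norm (F \<zeta>))\<^sup>2 \<partial>P)"
  proof -
    have "integrable ?B (\<lambda>\<beta>. (norm (\<Sum>j<n. F (\<beta> j)))\<^sup>2)
        \<and> (\<integral>\<beta>. (norm (\<Sum>j<n. F (\<beta> j)))\<^sup>2 \<partial>?B) = (\<Sum>j<n. \<integral>\<beta>. (norm (F (\<beta> j)))\<^sup>2 \<partial>?B)"
      by (rule B.integral_norm_sum_sq_indep[OF indep]) (simp_all add: Fj)
    then show "integrable ?B (\<lambda>\<beta>. (norm (\<Sum>j<n. F (\<beta> j)))\<^sup>2)"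
        "(\<integral>\<beta>. (norm (\<Sum>j<n. F (\<beta> j)))\<^sup>2 \<partial>?B) = real n * (\<integral>\<zeta>. (norm (F \<zeta>))\<^sup>2 \<partial>P)"
      by (simp_all add: Fj)
  qed
  have scale: "(norm ((1 / real n) *\<^sub>R v))\<^sup>2 = (norm v)\<^sup>2 / (real n)\<^sup>2" for v :: 'a
    by (simp add: power_divide)
  show "integrable (batch_law P n) (\<lambda>\<beta>. (1 / real n) *\<^sub>R (\<Sum>j<n. F (\<beta> j)))"
    unfolding batch_law_def by (intro integrable_scaleR_right Bochner_Integration.integrable_sum) (simp add: Fj)
  show "(\<integral>\<beta>. (1 / real n) *\<^sub>R (\<Sum>j<n. F (\<beta> j)) \<partial>batch_law P n) = 0"
    unfolding batch_law_def integral_scaleR_right by (subst Bochner_Integration.integral_sum) (simp_all add: Fj)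
  show "integrable (batch_law P n) (\<lambda>\<beta>. (norm ((1 / real n) *\<^sub>R (\<Sum>j<n. F (\<beta> j))))\<^sup>2)"
    unfolding batch_law_def scale using sum by simp
  show "(\<integral>\<beta>. (norm ((1 / real n) *\<^sub>R (\<Sum>j<n. F (\<beta> j))))\<^sup>2 \<partial>batch_law P n)
          = (\<integral>\<zeta>. (norm (F \<zeta>))\<^sup>2 \<partial>P) / real n"
    unfolding batch_law_def scale using sum n by (simp add: power2_eq_square)
qed

lemma indep_var_fst_snd:
  assumes "prob_space (M1 \<Otimes>\<^sub>M M2)"
    and "distr (M1 \<Otimes>\<^sub>M M2) M1 fst = M1" "distr (M1 \<Otimes>\<^sub>M M2) M2 snd = M2"
  shows "prob_space.indep_var (M1 \<Otimes>\<^sub>M M2) M1 fst M2 snd"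
proof -
  interpret prob_space "M1 \<Otimes>\<^sub>M M2" by fact
  have "distr (M1 \<Otimes>\<^sub>M M2) (M1 \<Otimes>\<^sub>M M2) (\<lambda>p. (fst p, snd p)) = M1 \<Otimes>\<^sub>M M2"
    by (simp add: distr_id)
  then show ?thesis
    using assms(2,3) by (simp add: indep_var_distribution_eq)
qed

lemma coupling_nn_integral_norm_add_sq_le:
  fixes Z W :: "'b \<Rightarrow> 'a::euclidean_space"
  assumes Q: "prob_space Q" "sets Q = sets (B \<Otimes>\<^sub>M Bh)"
    and marg: "distr Q B fst = B" "distr Q Bh snd = Bh"
    and Z: "integrable B Z" "integral\<^sup>L B Z = 0" and W: "integrable Bh W"
  shows "integrable Q (\<lambda>p. Z (fst p) + W (snd p))"
    and "(\<integral>p. Z (fst p) + W (snd p) \<partial>Q) = integral\<^sup>L Bh W"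
    and "(\<integral>\<^sup>+p. ennreal ((norm (Z (fst p) + W (snd p)))\<^sup>2) \<partial>Q)
           \<le> ennreal (if Q = B \<Otimes>\<^sub>M Bh then 1 else 2)
              * ((\<integral>\<^sup>+\<beta>. ennreal ((norm (Z \<beta>))\<^sup>2) \<partial>B) + (\<integral>\<^sup>+\<beta>. ennreal ((norm (W \<beta>))\<^sup>2) \<partial>Bh))"
proof -
  interpret Q: prob_space Q by (rule Q(1))
  have fst [measurable]: "fst \<in> measurable Q B"
    by (subst measurable_cong_sets[OF Q(2) refl]) (rule measurable_fst)
  have snd [measurable]: "snd \<in> measurable Q Bh"
    by (subst measurable_cong_sets[OF Q(2) refl]) (rule measurable_snd)
  have Zm [measurable]: "Z \<in> borel_measurable B" and Wm [measurable]: "W \<in> borel_measurable Bh"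
    using Z W by auto
  have ZQ: "integrable Q (\<lambda>p. Z (fst p))" "(\<integral>p. Z (fst p) \<partial>Q) = 0"
    using measure_preserving_integral[OF fst marg(1) Zm] Z by simp_all
  have WQ: "integrable Q (\<lambda>p. W (snd p))" "(\<integral>p. W (snd p) \<partial>Q) = integral\<^sup>L Bh W"
    using measure_preserving_integral[OF snd marg(2) Wm] W by simp_all
  show "integrable Q (\<lambda>p. Z (fst p) + W (snd p))"
    using ZQ WQ by simp
  show "(\<integral>p. Z (fst p) + W (snd p) \<partial>Q) = integral\<^sup>L Bh W"
    using ZQ WQ by simp
  have Z2: "(\<integral>\<^sup>+p. ennreal ((norm (Z (fst p)))\<^sup>2) \<partial>Q) = (\<integral>\<^sup>+\<beta>. ennreal ((norm (Z \<beta>))\<^sup>2) \<partial>B)"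
    using nn_integral_distr[OF fst, of "\<lambda>\<beta>. ennreal ((norm (Z \<beta>))\<^sup>2)"] marg(1) by simp
  have W2: "(\<integral>\<^sup>+p. ennreal ((norm (W (snd p)))\<^sup>2) \<partial>Q) = (\<integral>\<^sup>+\<beta>. ennreal ((norm (W \<beta>))\<^sup>2) \<partial>Bh)"
    using nn_integral_distr[OF snd, of "\<lambda>\<beta>. ennreal ((norm (W \<beta>))\<^sup>2)"] marg(2) by simp
  show "(\<integral>\<^sup>+p. ennreal ((norm (Z (fst p) + W (snd p)))\<^sup>2) \<partial>Q)
          \<le> ennreal (if Q = B \<Otimes>\<^sub>M Bh then 1 else 2)
             * ((\<integral>\<^sup>+\<beta>. ennreal ((norm (Z \<beta>))\<^sup>2) \<partial>B) + (\<integral>\<^sup>+\<beta>. ennreal ((norm (W \<beta>))\<^sup>2) \<partial>Bh))"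
  proof (cases "Q = B \<Otimes>\<^sub>M Bh")
    case True
    have "Q.indep_var B fst Bh snd"
      using indep_var_fst_snd[of B Bh] Q(1) marg True by simp
    then have "Q.indep_var borel (\<lambda>p. Z (fst p)) borel (\<lambda>p. W (snd p))"
      using Q.indep_var_compose[of B fst Bh snd Z borel W borel] by (simp add: comp_def)
    from Q.nn_integral_norm_add_sq_indep[OF this ZQ(1) WQ(1) ZQ(2)]
    show ?thesis
      using True Z2 W2 by simp
  next
    case False
    have "(\<integral>\<^sup>+p. ennreal ((norm (Z (fst p) + W (snd p)))\<^sup>2) \<partial>Q)
            \<le> 2 * (\<integral>\<^sup>+p. ennreal ((norm (Z (fst p)))\<^sup>2) \<partial>Q) + 2 * (\<integral>\<^sup>+p. ennreal ((norm (W (snd p)))\<^sup>2) \<partial>Q)"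
      by (rule nn_integral_norm_add_sq_le) measurable
    then show ?thesis
      using False Z2 W2 by (simp add: distrib_left)
  qed
qed

lemma classB_step_of_variance_bound:
  fixes e :: "'w \<Rightarrow> 'a::euclidean_space"
  assumes Q: "prob_space Q" and e: "integrable Q e" and mean: "integral\<^sup>L Q e = (1 - \<tau>) *\<^sub>R eprev"
    and \<tau>: "0 < \<tau>" "\<tau> \<le> 1" and \<Theta>: "0 \<le> \<Theta>" "0 \<le> \<Theta>h"
    and variance: "(\<integral>\<^sup>+w. ennreal ((norm (e w - integral\<^sup>L Q e))\<^sup>2) \<partial>Q)
                     \<le> ennreal (\<Theta> * dx + \<Theta>h * dx') + \<delta>"
    and dx: "0 \<le> dx" "0 \<le> dx'"
  shows "classB_step Q e (\<lambda>w. (norm (e w))\<^sup>2) eprev ((norm eprev)\<^sup>2)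
           \<tau> (\<tau> * (2 - \<tau>)) \<Theta> \<Theta>h dx dx' \<delta>"
proof -
  interpret Q: prob_space Q by (rule Q)
  have contraction: "1 - \<tau> * (2 - \<tau>) = (1 - \<tau>)\<^sup>2"
    by (simp add: power2_eq_square algebra_simps)
  have \<kappa>: "0 < \<tau> * (2 - \<tau>)" "\<tau> * (2 - \<tau>) \<le> 1"
    using \<tau> contraction zero_le_power2[of "1 - \<tau>"] by (simp, linarith)
  have "(\<integral>\<^sup>+w. ennreal ((norm (e w))\<^sup>2) \<partial>Q)
          = ennreal ((1 - \<tau>)\<^sup>2 * (norm eprev)\<^sup>2) + (\<integral>\<^sup>+w. ennreal ((norm (e w - integral\<^sup>L Q e))\<^sup>2) \<partial>Q)"
    using Q.nn_integral_norm_sq_bias_variance[OF e] mean \<tau> by (simp add: power_mult_distrib)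
  also have "\<dots> \<le> ennreal ((1 - \<tau>)\<^sup>2 * (norm eprev)\<^sup>2) + (ennreal (\<Theta> * dx + \<Theta>h * dx') + \<delta>)"
    using variance by (rule add_left_mono)
  also have "\<dots> = ennreal ((1 - \<tau> * (2 - \<tau>)) * (norm eprev)\<^sup>2 + \<Theta> * dx + \<Theta>h * dx') + \<delta>"
    using \<Theta> dx by (simp add: contraction ennreal_plus add.assoc)
  finally show ?thesis
    unfolding classB_step_def using \<tau> \<kappa> \<Theta> e mean by simp
qed

lemma classB_step_coupled_noise:
  fixes Z W :: "'b \<Rightarrow> 'a::euclidean_space" and eprev :: 'a
  assumes Q: "prob_space Q" "sets Q = sets (B \<Otimes>\<^sub>M Bh)"
    and marg: "distr Q B fst = B" "distr Q Bh snd = Bh"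
    and Z: "integrable B Z" "integral\<^sup>L B Z = 0" and W: "integrable Bh W" "integral\<^sup>L Bh W = 0"
    and \<tau>: "0 < \<tau>" "\<tau> \<le> 1" and \<Theta>: "0 \<le> \<Theta>" "0 \<le> \<Theta>h" and dx: "0 \<le> dx" "0 \<le> dx'"
    and Z2: "(\<integral>\<^sup>+\<beta>. ennreal ((norm (Z \<beta>))\<^sup>2) \<partial>B) \<le> ennreal V"
  defines "C \<equiv> if Q = B \<Otimes>\<^sub>M Bh then 1 else 2"
  assumes V: "C * (1 - \<tau>)\<^sup>2 * V \<le> \<Theta> * dx + \<Theta>h * dx'"
  defines "e \<equiv> \<lambda>p. (1 - \<tau>) *\<^sub>R eprev + ((1 - \<tau>) *\<^sub>R Z (fst p) + \<tau> *\<^sub>R W (snd p))"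
  shows "classB_step Q e (\<lambda>p. (norm (e p))\<^sup>2) eprev ((norm eprev)\<^sup>2) \<tau> (\<tau> * (2 - \<tau>)) \<Theta> \<Theta>h dx dx'
           (ennreal (C * \<tau>\<^sup>2) * (\<integral>\<^sup>+\<beta>. ennreal ((norm (W \<beta>))\<^sup>2) \<partial>Bh))"
proof -
  interpret Q: prob_space Q by (rule Q(1))
  have weighted: "integrable B (\<lambda>\<beta>. (1 - \<tau>) *\<^sub>R Z \<beta>)" "integral\<^sup>L B (\<lambda>\<beta>. (1 - \<tau>) *\<^sub>R Z \<beta>) = 0"
      "integrable Bh (\<lambda>\<beta>. \<tau> *\<^sub>R W \<beta>)"
    using Z W(1) by simp_all
  note coupling = coupling_nn_integral_norm_add_sq_le[OF Q marg weighted, folded C_def]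
  have e: "integrable Q e" "integral\<^sup>L Q e = (1 - \<tau>) *\<^sub>R eprev"
    using coupling(2) W(2) Q.integrable_const[of "(1 - \<tau>) *\<^sub>R eprev"]
    unfolding e_def by (simp_all add: coupling(1) Q.prob_space)
  have C: "0 \<le> C"
    by (simp add: C_def)
  have "(\<integral>\<^sup>+p. ennreal ((norm (e p - integral\<^sup>L Q e))\<^sup>2) \<partial>Q)
          = (\<integral>\<^sup>+p. ennreal ((norm ((1 - \<tau>) *\<^sub>R Z (fst p) + \<tau> *\<^sub>R W (snd p)))\<^sup>2) \<partial>Q)"
    unfolding e(2) by (simp add: e_def)
  also have "\<dots> \<le> ennreal C * (ennreal ((1 - \<tau>)\<^sup>2) * (\<integral>\<^sup>+\<beta>. ennreal ((norm (Z \<beta>))\<^sup>2) \<partial>B)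
                               + ennreal (\<tau>\<^sup>2) * (\<integral>\<^sup>+\<beta>. ennreal ((norm (W \<beta>))\<^sup>2) \<partial>Bh))"
    using coupling(3)
    unfolding nn_integral_norm_scaleR_sq[OF borel_measurable_integrable[OF Z(1)]]
      nn_integral_norm_scaleR_sq[OF borel_measurable_integrable[OF W(1)]] .
  also have "\<dots> = ennreal (C * (1 - \<tau>)\<^sup>2) * (\<integral>\<^sup>+\<beta>. ennreal ((norm (Z \<beta>))\<^sup>2) \<partial>B)
                  + ennreal (C * \<tau>\<^sup>2) * (\<integral>\<^sup>+\<beta>. ennreal ((norm (W \<beta>))\<^sup>2) \<partial>Bh)"
    using C by (simp add: distrib_left ennreal_mult mult.assoc)
  also have "\<dots> \<le> ennreal (C * (1 - \<tau>)\<^sup>2) * ennreal V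
                  + ennreal (C * \<tau>\<^sup>2) * (\<integral>\<^sup>+\<beta>. ennreal ((norm (W \<beta>))\<^sup>2) \<partial>Bh)"
    using Z2 by (intro add_right_mono mult_left_mono) simp_all
  also have "\<dots> \<le> ennreal (\<Theta> * dx + \<Theta>h * dx')
                  + ennreal (C * \<tau>\<^sup>2) * (\<integral>\<^sup>+\<beta>. ennreal ((norm (W \<beta>))\<^sup>2) \<partial>Bh)"
    using V C by (intro add_right_mono) (auto simp: ennreal_mult'[symmetric] intro: ennreal_leI)
  finally show ?thesis
    using classB_step_of_variance_bound[OF Q(1) e \<tau> \<Theta> _ dx] by simp
qed

section \<open>The variance-reduced estimator\<close>

lemma nn_integral_extrapolation_sq_le:
  fixes Gs :: "'a::euclidean_space \<Rightarrow> 'z \<Rightarrow> 'b::euclidean_space"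
  assumes meas: "\<And>x. Gs x \<in> borel_measurable P"
    and Lip: "\<And>x y. (\<integral>\<^sup>+\<zeta>. ennreal ((norm (Gs x \<zeta> - Gs y \<zeta>))\<^sup>2) \<partial>P) \<le> ennreal (L\<^sup>2 * (norm (x - y))\<^sup>2)"
  shows "(\<integral>\<^sup>+\<zeta>. ennreal ((norm ((2 *\<^sub>R Gs x \<zeta> - Gs y \<zeta>) - (2 *\<^sub>R Gs y \<zeta> - Gs z \<zeta>)))\<^sup>2) \<partial>P)
           \<le> ennreal (8 * L\<^sup>2 * (norm (x - y))\<^sup>2 + 2 * L\<^sup>2 * (norm (y - z))\<^sup>2)"
proof -
  have [measurable]: "Gs x \<in> borel_measurable P" "Gs y \<in> borel_measurable P" "Gs z \<in> borel_measurable P"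
    by (rule meas)+
  have split: "(2 *\<^sub>R Gs x \<zeta> - Gs y \<zeta>) - (2 *\<^sub>R Gs y \<zeta> - Gs z \<zeta>)
                 = 2 *\<^sub>R (Gs x \<zeta> - Gs y \<zeta>) + - (Gs y \<zeta> - Gs z \<zeta>)" for \<zeta>
    by (simp add: algebra_simps)
  have "(\<integral>\<^sup>+\<zeta>. ennreal ((norm ((2 *\<^sub>R Gs x \<zeta> - Gs y \<zeta>) - (2 *\<^sub>R Gs y \<zeta> - Gs z \<zeta>)))\<^sup>2) \<partial>P)
          \<le> 2 * (\<integral>\<^sup>+\<zeta>. ennreal ((norm (2 *\<^sub>R (Gs x \<zeta> - Gs y \<zeta>)))\<^sup>2) \<partial>P)
            + 2 * (\<integral>\<^sup>+\<zeta>. ennreal ((norm (- (Gs y \<zeta> - Gs z \<zeta>)))\<^sup>2) \<partial>P)"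
    unfolding split by (rule nn_integral_norm_add_sq_le) measurable
  also have "\<dots> = 8 * (\<integral>\<^sup>+\<zeta>. ennreal ((norm (Gs x \<zeta> - Gs y \<zeta>))\<^sup>2) \<partial>P)
                  + 2 * (\<integral>\<^sup>+\<zeta>. ennreal ((norm (Gs y \<zeta> - Gs z \<zeta>))\<^sup>2) \<partial>P)"
  proof -
    have "(\<lambda>\<zeta>. Gs x \<zeta> - Gs y \<zeta>) \<in> borel_measurable P"
      by measurable
    then show ?thesis
      by (simp only: nn_integral_norm_scaleR_sq norm_minus_cancel) (simp add: mult.assoc[symmetric])
  qed
  also have "\<dots> \<le> 8 * ennreal (L\<^sup>2 * (norm (x - y))\<^sup>2) + 2 * ennreal (L\<^sup>2 * (norm (y - z))\<^sup>2)"
    by (intro add_mono mult_left_mono Lip) simp_all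
  also have "\<dots> = ennreal (8 * L\<^sup>2 * (norm (x - y))\<^sup>2 + 2 * L\<^sup>2 * (norm (y - z))\<^sup>2)"
    by (simp add: ennreal_plus ennreal_mult mult.assoc)
  finally show ?thesis .
qed

lemma vr_est_error_decomposition:
  assumes "0 < b"
  shows "vr_est Gs b \<omega> Sprev Sbar xk xk1 xk2 \<beta> \<beta>h - (2 *\<^sub>R G xk - G xk1)
       = (1 - \<omega>) *\<^sub>R (Sprev - (2 *\<^sub>R G xk1 - G xk2))
         + (1 - \<omega>) *\<^sub>R ((1 / real b) *\<^sub>R
              (\<Sum>j<b. ((2 *\<^sub>R Gs xk (\<beta> j) - Gs xk1 (\<beta> j)) - (2 *\<^sub>R Gs xk1 (\<beta> j) - Gs xk2 (\<beta> j)))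
                      - ((2 *\<^sub>R G xk - G xk1) - (2 *\<^sub>R G xk1 - G xk2))))
         + \<omega> *\<^sub>R (Sbar \<beta>h - (2 *\<^sub>R G xk - G xk1))"
proof -
  let ?D = "\<lambda>\<zeta>. (2 *\<^sub>R Gs xk \<zeta> - Gs xk1 \<zeta>) - (2 *\<^sub>R Gs xk1 \<zeta> - Gs xk2 \<zeta>)"
  let ?m = "(2 *\<^sub>R G xk - G xk1) - (2 *\<^sub>R G xk1 - G xk2)"
  have "(\<Sum>j<b. ?D (\<beta> j))
      = (2 *\<^sub>R (\<Sum>j<b. Gs xk (\<beta> j)) - (\<Sum>j<b. Gs xk1 (\<beta> j)))
        - (2 *\<^sub>R (\<Sum>j<b. Gs xk1 (\<beta> j)) - (\<Sum>j<b. Gs xk2 (\<beta> j)))"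
    by (simp add: sum_subtractf scaleR_sum_right)
  then have sum: "(\<Sum>j<b. ?D (\<beta> j) - ?m)
      = (2 *\<^sub>R (\<Sum>j<b. Gs xk (\<beta> j)) - (\<Sum>j<b. Gs xk1 (\<beta> j)))
        - (2 *\<^sub>R (\<Sum>j<b. Gs xk1 (\<beta> j)) - (\<Sum>j<b. Gs xk2 (\<beta> j))) - real b *\<^sub>R ?m"
    by (simp only: sum_subtractf[of "\<lambda>j. ?D (\<beta> j)" "\<lambda>_. ?m"] sum_constant_scaleR card_lessThan)
  have batch: "(1 / real b) *\<^sub>R (\<Sum>j<b. ?D (\<beta> j) - ?m)
      = (2 *\<^sub>R batch_op Gs b \<beta> xk - batch_op Gs b \<beta> xk1)
        - (2 *\<^sub>R batch_op Gs b \<beta> xk1 - batch_op Gs b \<beta> xk2) - ?m"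
    unfolding sum batch_op_def using assms by (simp add: scaleR_diff_right)
  have "3 *\<^sub>R batch_op Gs b \<beta> xk1 = batch_op Gs b \<beta> xk1 + 2 *\<^sub>R batch_op Gs b \<beta> xk1"
    using scaleR_add_left[of 1 2 "batch_op Gs b \<beta> xk1"] by simp
  then show ?thesis
    unfolding batch vr_est_def by (simp add: algebra_simps)
qed

lemma batch_extrapolation_noise:
  fixes Gs :: "'a::euclidean_space \<Rightarrow> 'z \<Rightarrow> 'b::euclidean_space" and x y z :: 'a
  assumes P: "prob_space P" and int: "\<And>x. integrable P (Gs x)"
    and Lip: "\<And>x y. (\<integral>\<^sup>+\<zeta>. ennreal ((norm (Gs x \<zeta> - Gs y \<zeta>))\<^sup>2) \<partial>P) \<le> ennreal (L\<^sup>2 * (norm (x - y))\<^sup>2)"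
    and b: "0 < b"
  defines "D \<equiv> \<lambda>\<zeta>. (2 *\<^sub>R Gs x \<zeta> - Gs y \<zeta>) - (2 *\<^sub>R Gs y \<zeta> - Gs z \<zeta>)"
  defines "Z \<equiv> \<lambda>\<beta>. (1 / real b) *\<^sub>R (\<Sum>j<b. D (\<beta> j) - integral\<^sup>L P D)"
  shows "integrable (batch_law P b) Z" and "integral\<^sup>L (batch_law P b) Z = 0"
    and "(\<integral>\<^sup>+\<beta>. ennreal ((norm (Z \<beta>))\<^sup>2) \<partial>batch_law P b)
           \<le> ennreal ((8 * L\<^sup>2 * (norm (x - y))\<^sup>2 + 2 * L\<^sup>2 * (norm (y - z))\<^sup>2) / real b)"
proof -
  interpret prob_space P by (rule P)
  let ?bound = "8 * L\<^sup>2 * (norm (x - y))\<^sup>2 + 2 * L\<^sup>2 * (norm (y - z))\<^sup>2"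
  define U where "U = (\<lambda>\<zeta>. D \<zeta> - expectation D)"
  have D: "integrable P D"
    unfolding D_def using int by simp
  have U: "integrable P U" "expectation U = 0" "U \<in> borel_measurable P"
    unfolding U_def using D by (simp_all add: prob_space)
  have "(\<integral>\<^sup>+\<zeta>. ennreal ((norm (U \<zeta>))\<^sup>2) \<partial>P) \<le> (\<integral>\<^sup>+\<zeta>. ennreal ((norm (D \<zeta>))\<^sup>2) \<partial>P)"
    unfolding U_def nn_integral_norm_sq_bias_variance[OF D] by simp
  also have "\<dots> \<le> ennreal ?bound"
    unfolding D_def using int Lip by (intro nn_integral_extrapolation_sq_le) auto
  finally have U2_le: "(\<integral>\<^sup>+\<zeta>. ennreal ((norm (U \<zeta>))\<^sup>2) \<partial>P) \<le> ennreal ?bound" .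
  have U2: "integrable P (\<lambda>\<zeta>. (norm (U \<zeta>))\<^sup>2)"
    using le_less_trans[OF U2_le ennreal_less_top] by (simp add: integrable_norm_sq_iff[OF U(3)])
  have "ennreal (expectation (\<lambda>\<zeta>. (norm (U \<zeta>))\<^sup>2)) \<le> ennreal ?bound"
    using U2_le by (simp add: nn_integral_eq_integral[OF U2, symmetric])
  then have U2_bound: "expectation (\<lambda>\<zeta>. (norm (U \<zeta>))\<^sup>2) \<le> ?bound"
    by (subst (asm) ennreal_le_iff) auto
  note batch = batch_mean_second_moment[OF P b U(1) U2 U(2)]
  have Z_eq: "Z = (\<lambda>\<beta>. (1 / real b) *\<^sub>R (\<Sum>j<b. U (\<beta> j)))"
    unfolding Z_def U_def ..
  show "integrable (batch_law P b) Z" "integral\<^sup>L (batch_law P b) Z = 0"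
    unfolding Z_eq using batch(1,2) .
  have "(\<integral>\<^sup>+\<beta>. ennreal ((norm (Z \<beta>))\<^sup>2) \<partial>batch_law P b)
          = ennreal (expectation (\<lambda>\<zeta>. (norm (U \<zeta>))\<^sup>2) / real b)"
    unfolding Z_eq using batch(3,4) by (simp add: nn_integral_eq_integral)
  also have "\<dots> \<le> ennreal (?bound / real b)"
    using U2_bound by (intro ennreal_leI divide_right_mono) simp_all
  finally show "(\<integral>\<^sup>+\<beta>. ennreal ((norm (Z \<beta>))\<^sup>2) \<partial>batch_law P b) \<le> ennreal (?bound / real b)" .
qed

theorem mainTheorem8:
  fixes P :: "'z measure" and Gs :: "'a::euclidean_space \<Rightarrow> 'z \<Rightarrow> 'a" and G :: "'a \<Rightarrow> 'a"
    and \<sigma> L \<omega> :: real and b bh :: nat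
    and Q :: "((nat \<Rightarrow> 'z) \<times> (nat \<Rightarrow> 'z)) measure"
    and Sbar :: "(nat \<Rightarrow> 'z) \<Rightarrow> 'a"
    and xk xk1 xk2 Sprev :: 'a
  assumes P: "prob_space P"
    and E_int: "\<And>x. integrable P (Gs x)"
    and E_def: "\<And>x. G x = (\<integral>\<zeta>. Gs x \<zeta> \<partial>P)"
    and A_b: "\<And>x. (\<integral>\<^sup>+\<zeta>. ennreal ((norm (Gs x \<zeta> - G x))\<^sup>2) \<partial>P) \<le> ennreal (\<sigma>\<^sup>2)"
    and A_c: "\<And>x y. (\<integral>\<^sup>+\<zeta>. ennreal ((norm (Gs x \<zeta> - Gs y \<zeta>))\<^sup>2) \<partial>P)
                      \<le> ennreal (L\<^sup>2 * (norm (x - y))\<^sup>2)"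
    and \<omega>: "0 < \<omega>" "\<omega> \<le> 1"
    and b: "0 < b" "0 < bh"
    and Q: "prob_space Q" "sets Q = sets (batch_law P b \<Otimes>\<^sub>M batch_law P bh)"
    and Q_fst: "distr Q (batch_law P b) fst = batch_law P b"
    and Q_snd: "distr Q (batch_law P bh) snd = batch_law P bh"
    and Sbar_meas: "Sbar \<in> borel_measurable (batch_law P bh)"
    and Sbar_int: "integrable (batch_law P bh) Sbar"
    and Sbar_mean: "(\<integral>\<beta>. Sbar \<beta> \<partial>batch_law P bh) = 2 *\<^sub>R G xk - G xk1"
  defines "Sk \<equiv> 2 *\<^sub>R G xk - G xk1"
    and "Skm1 \<equiv> 2 *\<^sub>R G xk1 - G xk2"
    and "C \<equiv> (if Q = batch_law P b \<Otimes>\<^sub>M batch_law P bh then 1 else 2 :: real)"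
    and "\<sigma>k2 \<equiv> (\<integral>\<^sup>+\<beta>. ennreal ((norm (Sbar \<beta> - (2 *\<^sub>R G xk - G xk1)))\<^sup>2) \<partial>batch_law P bh)"
  shows "classB_step Q
           (\<lambda>(\<beta>, \<beta>h). vr_est Gs b \<omega> Sprev Sbar xk xk1 xk2 \<beta> \<beta>h - Sk)
           (\<lambda>(\<beta>, \<beta>h). (norm (vr_est Gs b \<omega> Sprev Sbar xk xk1 xk2 \<beta> \<beta>h - Sk))\<^sup>2)
           (Sprev - Skm1) ((norm (Sprev - Skm1))\<^sup>2)
           \<omega> (\<omega> * (2 - \<omega>))
           (8 * C * (1 - \<omega>)\<^sup>2 * L\<^sup>2 / real b) (2 * C * (1 - \<omega>)\<^sup>2 * L\<^sup>2 / real b)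
           ((norm (xk - xk1))\<^sup>2) ((norm (xk1 - xk2))\<^sup>2)
           (ennreal (C * \<omega>\<^sup>2) * \<sigma>k2)"
proof -
  interpret Bh: prob_space "batch_law P bh"
    unfolding batch_law_def using P by (rule prob_space_PiM)
  let ?D = "\<lambda>\<zeta>. (2 *\<^sub>R Gs xk \<zeta> - Gs xk1 \<zeta>) - (2 *\<^sub>R Gs xk1 \<zeta> - Gs xk2 \<zeta>)"
  let ?bound = "8 * L\<^sup>2 * (norm (xk - xk1))\<^sup>2 + 2 * L\<^sup>2 * (norm (xk1 - xk2))\<^sup>2"
  define Z where "Z \<beta> = (1 / real b) *\<^sub>R (\<Sum>j<b. ?D (\<beta> j) - integral\<^sup>L P ?D)" for \<beta>
  define W where "W \<beta> = Sbar \<beta> - Sk" for \<beta>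
  note Z = batch_extrapolation_noise[OF P E_int A_c b(1), of xk xk1 xk2, folded Z_def]
  have W: "integrable (batch_law P bh) W" "integral\<^sup>L (batch_law P bh) W = 0"
    using Sbar_int Sbar_mean unfolding W_def[abs_def] Sk_def by (simp_all add: Bh.prob_space)
  have rate: "C * (1 - \<omega>)\<^sup>2 * (?bound / real b)
      \<le> 8 * C * (1 - \<omega>)\<^sup>2 * L\<^sup>2 / real b * (norm (xk - xk1))\<^sup>2
        + 2 * C * (1 - \<omega>)\<^sup>2 * L\<^sup>2 / real b * (norm (xk1 - xk2))\<^sup>2"
    by (simp add: field_simps add_divide_distrib)
  have D_mean: "integral\<^sup>L P ?D = Sk - Skm1"
    using E_int by (simp add: E_def Sk_def Skm1_def)
  have "vr_est Gs b \<omega> Sprev Sbar xk xk1 xk2 \<beta> \<beta>h - Sk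
          = (1 - \<omega>) *\<^sub>R (Sprev - Skm1) + ((1 - \<omega>) *\<^sub>R Z \<beta> + \<omega> *\<^sub>R W \<beta>h)" for \<beta> \<beta>h
    by (simp add: vr_est_error_decomposition[OF b(1)] Z_def W_def D_mean Sk_def Skm1_def)
  moreover have "(\<integral>\<^sup>+\<beta>. ennreal ((norm (W \<beta>))\<^sup>2) \<partial>batch_law P bh) = \<sigma>k2"
    unfolding W_def \<sigma>k2_def Sk_def ..
  ultimately show ?thesis
    using classB_step_coupled_noise[OF Q Q_fst Q_snd Z(1,2) W \<omega> _ _ _ _ Z(3) rate[unfolded C_def]]
    by (simp add: C_def split_beta')
qed

end
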